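(* If $\otimes=\min$ and $\oplus$ is any uninorm on $[0,1]$, then $(\otimes,\oplus)$ satisfies the rearrangement inequality and the dual rearrangement inequality. If $\oplus=\max$ and $\otimes$ is any uninorm on $[0,1]$, then $(\otimes,\oplus)$ satisfies the rearrangement inequality and the dual rearrangement inequality.
   Context: A uninorm is a function $\otimes:[0,1]^2\to[0,1]$ that is commutative, associative, monotonic ($x\leq y$ implies $x\otimes z\leq y\otimes z$), and has an identity element $e\in[0,1]$ ($\min$ and $\max$ are uninorms). $(\otimes,\oplus)$ satisfies the rearrangement inequality if for every $n\geq1$, all $0\leq x_1\leq\cdots\leq x_n\leq 1$, $0\leq y_1\leq\cdots\leq y_n\leq 1$ and every permutation $\sigma$ of $\{1,\dots,n\}$, $$(x_n\otimes y_1)\oplus\cdots\oplus(x_1\otimes y_n)\leq (x_{\sigma(1)}\otimes y_1)\oplus\cdots\oplus(x_{\sigma(n)}\otimes y_n)\leq (x_1\otimes y_1)\oplus\cdots\oplus(x_n\otimes y_n),$$ and the dual rearrangement inequality if for all such data $$(x_n\oplus y_1)\otimes\cdots\otimes(x_1\oplus y_n)\geq (x_{\sigma(1)}\oplus y_1)\otimes\cdots\otimes(x_{\sigma(n)}\oplus y_n)\geq (x_1\oplus y_1)\otimes\cdots\otimes(x_n\oplus y_n).$$ *)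

theory Defs
  imports Complex_Main "HOL-Combinatorics.Permutations"
begin

definition uninorm :: "(real \<Rightarrow> real \<Rightarrow> real) \<Rightarrow> bool" where
  "uninorm U \<longleftrightarrow>
     (\<forall>x\<in>{0..1}. \<forall>y\<in>{0..1}. U x y \<in> {0..1}) \<and>
     (\<forall>x\<in>{0..1}. \<forall>y\<in>{0..1}. U x y = U y x) \<and>
     (\<forall>x\<in>{0..1}. \<forall>y\<in>{0..1}. \<forall>z\<in>{0..1}. U (U x y) z = U x (U y z)) \<and>
     (\<forall>x\<in>{0..1}. \<forall>y\<in>{0..1}. \<forall>z\<in>{0..1}. x \<le> y \<longrightarrow> U x z \<le> U y z) \<and>
     (\<exists>e\<in>{0..1}. \<forall>x\<in>{0..1}. U e x = x)"

text \<open>Iterated operation  a 0 \<otimes> a 1 \<otimes> ... \<otimes> a (n-1)  (left-nested), for n \<ge> 1.\<close>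
definition agg :: "(real \<Rightarrow> real \<Rightarrow> real) \<Rightarrow> (nat \<Rightarrow> real) \<Rightarrow> nat \<Rightarrow> real" where
  "agg U a n = foldl U (a 0) (map a [1..<n])"

text \<open>Rearrangement inequality, with indices shifted to 0..n-1.\<close>
definition rearrangement_ineq ::
  "(real \<Rightarrow> real \<Rightarrow> real) \<Rightarrow> (real \<Rightarrow> real \<Rightarrow> real) \<Rightarrow> bool" where
  "rearrangement_ineq T S \<longleftrightarrow>
    (\<forall>n::nat. \<forall>x y :: nat \<Rightarrow> real. \<forall>\<sigma>.
       n \<ge> 1 \<longrightarrow>
       (\<forall>i<n. 0 \<le> x i \<and> x i \<le> 1 \<and> 0 \<le> y i \<and> y i \<le> 1) \<longrightarrow>
       (\<forall>i j. i \<le> j \<longrightarrow> j < n \<longrightarrow> x i \<le> x j \<and> y i \<le> y j) \<longrightarrow>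
       \<sigma> permutes {..<n} \<longrightarrow>
       agg S (\<lambda>i. T (x (n - 1 - i)) (y i)) n \<le> agg S (\<lambda>i. T (x (\<sigma> i)) (y i)) n \<and>
       agg S (\<lambda>i. T (x (\<sigma> i)) (y i)) n \<le> agg S (\<lambda>i. T (x i) (y i)) n)"

definition dual_rearrangement_ineq ::
  "(real \<Rightarrow> real \<Rightarrow> real) \<Rightarrow> (real \<Rightarrow> real \<Rightarrow> real) \<Rightarrow> bool" where
  "dual_rearrangement_ineq T S \<longleftrightarrow>
    (\<forall>n::nat. \<forall>x y :: nat \<Rightarrow> real. \<forall>\<sigma>.
       n \<ge> 1 \<longrightarrow>
       (\<forall>i<n. 0 \<le> x i \<and> x i \<le> 1 \<and> 0 \<le> y i \<and> y i \<le> 1) \<longrightarrow>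
       (\<forall>i j. i \<le> j \<longrightarrow> j < n \<longrightarrow> x i \<le> x j \<and> y i \<le> y j) \<longrightarrow>
       \<sigma> permutes {..<n} \<longrightarrow>
       agg T (\<lambda>i. S (x (n - 1 - i)) (y i)) n \<ge> agg T (\<lambda>i. S (x (\<sigma> i)) (y i)) n \<and>
       agg T (\<lambda>i. S (x (\<sigma> i)) (y i)) n \<ge> agg T (\<lambda>i. S (x i) (y i)) n)"

end

theory Submission
  imports Defs
begin

text \<open>For entries \<open>F (x j) (y i)\<close> aggregated by a uninorm \<open>U\<close>, everything follows from the
  two-by-two exchange inequality \<open>U (F x' y) (F x y') \<le> U (F x y) (F x' y')\<close> for \<open>x \<le> x'\<close>,
  \<open>y \<le> y'\<close> (reversed for the dual inequality). Commutativity, associativity and the neutral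
  element of \<open>U\<close> isolate any two entries of the aggregate, so an inversion of \<open>\<sigma>\<close> can be removed
  without decreasing it, and by induction the identity is optimal; applied to the reversed
  sequence \<open>x\<close> this makes the reversal optimal in the other direction. When one of the two
  operations is \<open>min\<close> or \<open>max\<close>, the exchange inequality follows from monotonicity alone.\<close>

lemma uninorm_closed: "uninorm U \<Longrightarrow> x \<in> {0..1} \<Longrightarrow> y \<in> {0..1} \<Longrightarrow> U x y \<in> {0..1}"
  unfolding uninorm_def by blast

lemma uninorm_commute: "uninorm U \<Longrightarrow> x \<in> {0..1} \<Longrightarrow> y \<in> {0..1} \<Longrightarrow> U x y = U y x"
  unfolding uninorm_def by blast

lemma uninorm_assoc:
  "uninorm U \<Longrightarrow> x \<in> {0..1} \<Longrightarrow> y \<in> {0..1} \<Longrightarrow> z \<in> {0..1} \<Longrightarrow> U (U x y) z = U x (U y z)"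
  unfolding uninorm_def by blast

lemma uninorm_mono_left:
  "uninorm U \<Longrightarrow> x \<in> {0..1} \<Longrightarrow> y \<in> {0..1} \<Longrightarrow> z \<in> {0..1} \<Longrightarrow> x \<le> y \<Longrightarrow> U x z \<le> U y z"
  unfolding uninorm_def by blast

lemma uninorm_mono_right:
  "uninorm U \<Longrightarrow> x \<in> {0..1} \<Longrightarrow> y \<in> {0..1} \<Longrightarrow> z \<in> {0..1} \<Longrightarrow> x \<le> y \<Longrightarrow> U z x \<le> U z y"
  using uninorm_mono_left uninorm_commute by metis

lemma uninorm_neutral:
  assumes "uninorm U"
  obtains e where "e \<in> {0..1}" "\<And>x. x \<in> {0..1} \<Longrightarrow> U x e = x"
  using assms uninorm_commute unfolding uninorm_def by metis

lemma uninorm_min: "uninorm min"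
  unfolding uninorm_def by (auto intro!: bexI[of _ 1])

lemma uninorm_max: "uninorm max"
  unfolding uninorm_def by (auto intro!: bexI[of _ 0])

lemma agg_Suc_0 [simp]: "agg U a (Suc 0) = a 0"
  by (simp add: agg_def)

text \<open>The side condition matters: \<open>agg U a 0 = a 0\<close> as well.\<close>
lemma agg_Suc: "m \<ge> 1 \<Longrightarrow> agg U a (Suc m) = U (agg U a m) (a m)"
  by (simp add: agg_def)

lemma agg_cong: "(\<And>i. i < m \<Longrightarrow> a i = b i) \<Longrightarrow> m \<ge> 1 \<Longrightarrow> agg U a m = agg U b m"
  unfolding agg_def by (auto intro!: arg_cong2[where f = "foldl U"])

lemma agg_closed:
  assumes "uninorm U" "m \<ge> 1" "\<And>i. i < m \<Longrightarrow> a i \<in> {0..1}"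
  shows "agg U a m \<in> {0..1}"
  using assms(2,3)
proof (induction m rule: nat_induct_at_least)
  case (Suc m)
  then have "agg U a m \<in> {0..1}" "a m \<in> {0..1}"
    by simp_all
  with Suc.hyps show ?case
    by (metis agg_Suc uninorm_closed[OF assms(1)])
qed simp

lemma agg_pull_out:
  assumes U: "uninorm U" and e: "e \<in> {0..1}" "\<And>x. x \<in> {0..1} \<Longrightarrow> U x e = x"
    and a: "\<And>i. i < m \<Longrightarrow> a i \<in> {0..1}" and "k < m"
  shows "agg U a m = U (agg U (a(k := e)) m) (a k)"
proof -
  from \<open>k < m\<close> have "m \<ge> 1" by simp
  then show ?thesis
    using a \<open>k < m\<close>
  proof (induction m rule: nat_induct_at_least)
    case base
    then show ?case using e uninorm_commute[OF U, of e "a 0"] by simp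
  next
    case (Suc m)
    show ?case
    proof (cases "k = m")
      case True
      have "agg U (a(k := e)) (Suc m) = U (agg U a m) e"
        using Suc.hyps True agg_cong[of m "a(k := e)" a U] by (simp add: agg_Suc)
      also have "\<dots> = agg U a m"
        using e agg_closed[OF U Suc.hyps] Suc.prems by simp
      finally show ?thesis
        using True by (simp only: agg_Suc[OF Suc.hyps, of U a])
    next
      case False
      define r where "r = agg U (a(k := e)) m"
      have r: "r \<in> {0..1}"
        unfolding r_def using agg_closed[OF U Suc.hyps, of "a(k := e)"] Suc.prems e by simp
      have ak: "a k \<in> {0..1}" "a m \<in> {0..1}"
        using Suc.prems by simp_all
      have IH: "agg U a m = U r (a k)"
        unfolding r_def by (rule Suc.IH) (use Suc.prems False in auto)
      have "agg U a (Suc m) = U (U r (a k)) (a m)"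
        using Suc.hyps IH by (simp add: agg_Suc)
      also have "\<dots> = U (U r (a m)) (a k)"
        using r ak by (simp add: uninorm_assoc[OF U] uninorm_commute[OF U ak])
      also have "U r (a m) = agg U (a(k := e)) (Suc m)"
        using Suc.hyps False by (simp add: agg_Suc r_def)
      finally show ?thesis .
    qed
  qed
qed

lemma agg_exchange_le:
  assumes U: "uninorm U"
    and mono: "\<And>a b c. a \<in> {0..1} \<Longrightarrow> b \<in> {0..1} \<Longrightarrow> c \<in> {0..1} \<Longrightarrow> le a b \<Longrightarrow> le (U a c) (U b c)"
    and a: "\<And>i. i \<le> m \<Longrightarrow> a i \<in> {0..1}" and b: "\<And>i. i \<le> m \<Longrightarrow> b i \<in> {0..1}"
    and "k < m" and same: "\<And>i. i < m \<Longrightarrow> i \<noteq> k \<Longrightarrow> a i = b i"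
    and pair: "le (U (a k) (a m)) (U (b k) (b m))"
  shows "le (agg U a (Suc m)) (agg U b (Suc m))"
proof -
  obtain e where e: "e \<in> {0..1}" "\<And>x. x \<in> {0..1} \<Longrightarrow> U x e = x"
    using uninorm_neutral[OF U] by blast
  have "m \<ge> 1" using \<open>k < m\<close> by simp
  define r where "r = agg U (a(k := e)) m"
  have r: "r \<in> {0..1}"
    unfolding r_def using agg_closed[OF U \<open>m \<ge> 1\<close>, of "a(k := e)"] a e by simp
  have r_b: "r = agg U (b(k := e)) m"
    unfolding r_def using same \<open>m \<ge> 1\<close> by (intro agg_cong) auto
  have pair_last: "agg U c (Suc m) = U r (U (c k) (c m))"
    if "c = a \<or> c = b" for c
  proof -
    have c: "\<And>i. i \<le> m \<Longrightarrow> c i \<in> {0..1}" using that a b by blast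
    have "agg U c (Suc m) = U (U (agg U (c(k := e)) m) (c k)) (c m)"
      using agg_pull_out[OF U e, of m c k] c \<open>k < m\<close> \<open>m \<ge> 1\<close> by (simp add: agg_Suc)
    then show ?thesis
      using that r_b r c \<open>k < m\<close> by (auto simp: r_def uninorm_assoc[OF U])
  qed
  have pairs: "U (a k) (a m) \<in> {0..1}" "U (b k) (b m) \<in> {0..1}"
    using a b \<open>k < m\<close> by (meson U less_imp_le order_refl uninorm_closed)+
  show ?thesis
    using mono[OF pairs r pair] pairs r by (simp add: pair_last uninorm_commute[OF U])
qed

text \<open>Exchanging the two entries that put the last index in place moves \<open>\<sigma>\<close> towards the
  identity without decreasing the aggregate; the first \<open>n\<close> entries are handled by induction.\<close>
lemma agg_permute_le:
  assumes U: "uninorm U" and "reflp le" "transp le"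
    and mono: "\<And>a b c. a \<in> {0..1} \<Longrightarrow> b \<in> {0..1} \<Longrightarrow> c \<in> {0..1} \<Longrightarrow> le a b \<Longrightarrow> le (U a c) (U b c)"
    and "n \<ge> 1"
    and t: "\<And>i j. i < n \<Longrightarrow> j < n \<Longrightarrow> t i j \<in> {0..1}"
    and exchange: "\<And>i i' j j'. i \<le> i' \<Longrightarrow> i' < n \<Longrightarrow> j \<le> j' \<Longrightarrow> j' < n \<Longrightarrow>
      le (U (t i j') (t i' j)) (U (t i j) (t i' j'))"
    and "\<sigma> permutes {..<n}"
  shows "le (agg U (\<lambda>i. t i (\<sigma> i)) n) (agg U (\<lambda>i. t i i) n)"
  using \<open>n \<ge> 1\<close> t exchange \<open>\<sigma> permutes {..<n}\<close>
proof (induction n arbitrary: \<sigma> rule: nat_induct_at_least)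
  case base
  then have "\<sigma> 0 = 0"
    using permutes_in_image[of \<sigma> "{..<1}" 0] by simp
  then show ?case using \<open>reflp le\<close> by (simp add: reflpD)
next
  case (Suc n)
  define \<tau> where "\<tau> = transpose n (\<sigma> n) \<circ> \<sigma>"
  have \<tau>: "\<tau> permutes {..<n}"
    unfolding \<tau>_def using permutes_insert_lemma[of \<sigma> n "{..<n}"] Suc.prems(3)
    by (simp add: lessThan_Suc)
  have "\<tau> n = n" by (simp add: \<tau>_def)
  have \<sigma>_range: "\<And>i. i < Suc n \<Longrightarrow> \<sigma> i < Suc n"
    using Suc.prems(3) permutes_in_image by fastforce
  have \<tau>_range: "\<And>i. i < Suc n \<Longrightarrow> \<tau> i < Suc n"
    using \<tau> \<open>\<tau> n = n\<close> permutes_in_image less_Suc_eq by fastforce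
  have step: "le (agg U (\<lambda>i. t i (\<sigma> i)) (Suc n)) (agg U (\<lambda>i. t i (\<tau> i)) (Suc n))"
  proof (cases "\<sigma> n = n")
    case True
    then show ?thesis using \<open>reflp le\<close> by (simp add: \<tau>_def reflpD)
  next
    case False
    obtain k where k: "k < Suc n" "\<sigma> k = n"
      using Suc.prems(3) by (metis lessI permutes_image imageE lessThan_iff)
    show ?thesis
    proof (rule agg_exchange_le[where le = le, OF U mono])
      show "k < n" using k False by (metis less_SucE)
      show "t i (\<sigma> i) = t i (\<tau> i)" if "i < n" "i \<noteq> k" for i
      proof -
        have "\<sigma> i \<noteq> n" "\<sigma> i \<noteq> \<sigma> n"
          using that k permutes_inj[OF Suc.prems(3)] by (metis injD less_irrefl)+
        then show ?thesis by (simp add: \<tau>_def)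
      qed
      show "le (U (t k (\<sigma> k)) (t n (\<sigma> n))) (U (t k (\<tau> k)) (t n (\<tau> n)))"
        using Suc.prems(2)[of k n "\<sigma> n" n] \<open>k < n\<close> \<sigma>_range[of n] k \<open>\<tau> n = n\<close>
        by (simp add: \<tau>_def)
    qed (use Suc.prems(1) \<sigma>_range \<tau>_range in auto)
  qed
  have "le (agg U (\<lambda>i. t i (\<tau> i)) n) (agg U (\<lambda>i. t i i) n)"
    by (rule Suc.IH) (use Suc.prems \<tau> in auto)
  moreover have "agg U (\<lambda>i. t i (\<tau> i)) n \<in> {0..1}" "agg U (\<lambda>i. t i i) n \<in> {0..1}"
    by (rule agg_closed[OF U \<open>n \<ge> 1\<close>]; use Suc.prems(1) \<tau>_range in force)+
  ultimately have "le (agg U (\<lambda>i. t i (\<tau> i)) (Suc n)) (agg U (\<lambda>i. t i i) (Suc n))"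
    using mono Suc.prems(1)[of n n] \<open>\<tau> n = n\<close> \<open>n \<ge> 1\<close> by (simp add: agg_Suc)
  with step show ?case
    using \<open>transp le\<close> by (rule transpD[rotated])
qed

lemma reverse_permutes: "(\<lambda>j. if j < n then n - 1 - j else j) permutes {..<n :: nat}"
  by (rule bij_imp_permutes, rule bij_betw_byWitness[where f' = "\<lambda>j. n - 1 - j"]) auto

text \<open>The lower bound is the upper bound for the reversed order, applied to the
  reversed sequence \<open>x\<close> and the reversed permutation.\<close>
lemma agg_rearrangement_bounds:
  assumes U: "uninorm U" and "reflp le" "transp le"
    and mono: "\<And>a b c. a \<in> {0..1} \<Longrightarrow> b \<in> {0..1} \<Longrightarrow> c \<in> {0..1} \<Longrightarrow> le a b \<Longrightarrow> le (U a c) (U b c)"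
    and F: "\<And>a b. a \<in> {0..1} \<Longrightarrow> b \<in> {0..1} \<Longrightarrow> F a b \<in> {0..1}"
    and F_exchange: "\<And>x x' y y'. x \<in> {0..1} \<Longrightarrow> x' \<in> {0..1} \<Longrightarrow> y \<in> {0..1} \<Longrightarrow> y' \<in> {0..1} \<Longrightarrow>
      x \<le> x' \<Longrightarrow> y \<le> y' \<Longrightarrow> le (U (F x' y) (F x y')) (U (F x y) (F x' y'))"
    and "n \<ge> 1"
    and range: "\<forall>i<n. 0 \<le> x i \<and> x i \<le> 1 \<and> 0 \<le> y i \<and> y i \<le> 1"
    and sorted: "\<forall>i j. i \<le> j \<longrightarrow> j < n \<longrightarrow> x i \<le> x j \<and> y i \<le> y j"
    and \<sigma>: "\<sigma> permutes {..<n}"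
  shows "le (agg U (\<lambda>i. F (x (n - 1 - i)) (y i)) n) (agg U (\<lambda>i. F (x (\<sigma> i)) (y i)) n) \<and>
         le (agg U (\<lambda>i. F (x (\<sigma> i)) (y i)) n) (agg U (\<lambda>i. F (x i) (y i)) n)"
proof
  have mono': "\<And>a b c. a \<in> {0..1} \<Longrightarrow> b \<in> {0..1} \<Longrightarrow> c \<in> {0..1} \<Longrightarrow>
      le\<inverse>\<inverse> a b \<Longrightarrow> le\<inverse>\<inverse> (U a c) (U b c)"
    using mono by simp
  have "reflp le\<inverse>\<inverse>" "transp le\<inverse>\<inverse>"
    using \<open>reflp le\<close> \<open>transp le\<close> by (auto simp: reflp_def)
  define \<rho> where "\<rho> = (\<lambda>j::nat. if j < n then n - 1 - j else j)"
  have \<rho>\<sigma>: "\<rho> \<circ> \<sigma> permutes {..<n}"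
    unfolding \<rho>_def by (rule permutes_compose[OF \<sigma> reverse_permutes])
  have "le\<inverse>\<inverse> (agg U (\<lambda>i. F (x (n - 1 - (\<rho> \<circ> \<sigma>) i)) (y i)) n)
      (agg U (\<lambda>i. F (x (n - 1 - i)) (y i)) n)"
  proof (rule agg_permute_le[where le = "le\<inverse>\<inverse>" and t = "\<lambda>i j. F (x (n - 1 - j)) (y i)"
        and \<sigma> = "\<rho> \<circ> \<sigma>"])
    show "F (x (n - 1 - j)) (y i) \<in> {0..1}" if "i < n" "j < n" for i j
      using that range F by simp
    show "le\<inverse>\<inverse> (U (F (x (n - 1 - j')) (y i)) (F (x (n - 1 - j)) (y i')))
        (U (F (x (n - 1 - j)) (y i)) (F (x (n - 1 - j')) (y i')))"
      if "i \<le> i'" "i' < n" "j \<le> j'" "j' < n" for i i' j j'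
    proof (simp only: conversep_iff, rule F_exchange)
      show "x (n - 1 - j') \<le> x (n - 1 - j)"
        using sorted[rule_format, of "n - 1 - j'" "n - 1 - j"] that \<open>n \<ge> 1\<close> by linarith
      show "y i \<le> y i'"
        using sorted[rule_format, of i i'] that by blast
    qed (use range that in auto)
  qed (fact U \<open>reflp le\<inverse>\<inverse>\<close> \<open>transp le\<inverse>\<inverse>\<close> mono' \<open>n \<ge> 1\<close> \<rho>\<sigma>)+
  moreover have "agg U (\<lambda>i. F (x (n - 1 - (\<rho> \<circ> \<sigma>) i)) (y i)) n =
      agg U (\<lambda>i. F (x (\<sigma> i)) (y i)) n"
  proof (rule agg_cong[OF _ \<open>n \<ge> 1\<close>])
    fix i assume "i < n"
    then have "\<sigma> i < n" using permutes_in_image[OF \<sigma>] by simp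
    then show "F (x (n - 1 - (\<rho> \<circ> \<sigma>) i)) (y i) = F (x (\<sigma> i)) (y i)"
      by (simp add: \<rho>_def)
  qed
  ultimately show "le (agg U (\<lambda>i. F (x (n - 1 - i)) (y i)) n) (agg U (\<lambda>i. F (x (\<sigma> i)) (y i)) n)"
    by simp
  show "le (agg U (\<lambda>i. F (x (\<sigma> i)) (y i)) n) (agg U (\<lambda>i. F (x i) (y i)) n)"
  proof (rule agg_permute_le[where le = le and t = "\<lambda>i j. F (x j) (y i)" and \<sigma> = \<sigma>])
    show "F (x j) (y i) \<in> {0..1}" if "i < n" "j < n" for i j
      using that range F by simp
    show "le (U (F (x j') (y i)) (F (x j) (y i'))) (U (F (x j) (y i)) (F (x j') (y i')))"
      if "i \<le> i'" "i' < n" "j \<le> j'" "j' < n" for i i' j j'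
    proof (rule F_exchange)
      show "x j \<le> x j'" "y i \<le> y i'"
        using sorted[rule_format, of j j'] sorted[rule_format, of i i'] that by blast+
    qed (use range that in auto)
  qed (fact U \<open>reflp le\<close> \<open>transp le\<close> mono \<open>n \<ge> 1\<close> \<sigma>)+
qed

lemma rearrangement_ineqI:
  assumes "uninorm S" and "\<And>a b. a \<in> {0..1} \<Longrightarrow> b \<in> {0..1} \<Longrightarrow> T a b \<in> {0..1}"
    and "\<And>x x' y y'. x \<in> {0..1} \<Longrightarrow> x' \<in> {0..1} \<Longrightarrow> y \<in> {0..1} \<Longrightarrow> y' \<in> {0..1} \<Longrightarrow>
      x \<le> x' \<Longrightarrow> y \<le> y' \<Longrightarrow> S (T x' y) (T x y') \<le> S (T x y) (T x' y')"
  shows "rearrangement_ineq T S"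
  unfolding rearrangement_ineq_def
proof (intro allI impI, rule agg_rearrangement_bounds[where le = "(\<le>)"])
  show "reflp ((\<le>) :: real \<Rightarrow> _)" "transp ((\<le>) :: real \<Rightarrow> _)"
    by (simp_all add: reflpI transpI)
qed (assumption | rule assms uninorm_mono_left[OF assms(1)]; assumption)+

lemma dual_rearrangement_ineqI:
  assumes "uninorm T" and "\<And>a b. a \<in> {0..1} \<Longrightarrow> b \<in> {0..1} \<Longrightarrow> S a b \<in> {0..1}"
    and "\<And>x x' y y'. x \<in> {0..1} \<Longrightarrow> x' \<in> {0..1} \<Longrightarrow> y \<in> {0..1} \<Longrightarrow> y' \<in> {0..1} \<Longrightarrow>
      x \<le> x' \<Longrightarrow> y \<le> y' \<Longrightarrow> T (S x y) (S x' y') \<le> T (S x' y) (S x y')"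
  shows "dual_rearrangement_ineq T S"
  unfolding dual_rearrangement_ineq_def
proof (intro allI impI, rule agg_rearrangement_bounds[where le = "(\<ge>)"])
  show "reflp ((\<ge>) :: real \<Rightarrow> _)" "transp ((\<ge>) :: real \<Rightarrow> _)"
    by (simp_all add: reflpI transpI)
qed (assumption | rule assms uninorm_mono_left[OF assms(1)]; assumption)+

lemma uninorm_min_exchange:
  assumes S: "uninorm S" and "x \<in> {0..1}" "x' \<in> {0..1}" "y \<in> {0..1}" "y' \<in> {0..1}"
    and "x \<le> x'" "y \<le> y'"
  shows "S (min x' y) (min x y') \<le> S (min x y) (min x' y')"
proof (cases "x \<le> y")
  case True
  then have "S (min x' y) x \<le> S (min x' y') x"
    using assms by (intro uninorm_mono_left[OF S]) auto
  with True \<open>y \<le> y'\<close> show ?thesis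
    using assms uninorm_commute[OF S, of x "min x' y'"] by (simp add: min_absorb1)
next
  case False
  then have "S y (min x y') \<le> S y (min x' y')"
    using assms by (intro uninorm_mono_right[OF S]) auto
  with False \<open>x \<le> x'\<close> show ?thesis
    by (simp add: min_absorb2)
qed

lemma min_uninorm_exchange:
  assumes S: "uninorm S" and "x \<in> {0..1}" "x' \<in> {0..1}" "y \<in> {0..1}" "y' \<in> {0..1}"
    and "x \<le> x'" "y \<le> y'"
  shows "min (S x y) (S x' y') \<le> min (S x' y) (S x y')"
  using uninorm_mono_left[OF S, of x x' y] uninorm_mono_right[OF S, of y y' x] assms
  by (simp add: min.coboundedI1)

lemma max_uninorm_exchange:
  assumes T: "uninorm T" and "x \<in> {0..1}" "x' \<in> {0..1}" "y \<in> {0..1}" "y' \<in> {0..1}"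
    and "x \<le> x'" "y \<le> y'"
  shows "max (T x' y) (T x y') \<le> max (T x y) (T x' y')"
  using uninorm_mono_right[OF T, of y y' x'] uninorm_mono_left[OF T, of x x' y'] assms
  by (simp add: max.coboundedI2)

lemma uninorm_max_exchange:
  assumes T: "uninorm T" and "x \<in> {0..1}" "x' \<in> {0..1}" "y \<in> {0..1}" "y' \<in> {0..1}"
    and "x \<le> x'" "y \<le> y'"
  shows "T (max x y) (max x' y') \<le> T (max x' y) (max x y')"
proof (cases "y' \<le> x'")
  case True
  then have "T (max x y) x' \<le> T (max x y') x'"
    using assms by (intro uninorm_mono_left[OF T]) auto
  with True \<open>y \<le> y'\<close> show ?thesis
    using assms uninorm_commute[OF T, of x' "max x y'"] by (simp add: max_absorb1)
next
  case False
  then have "T (max x y) y' \<le> T (max x' y) y'"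
    using assms by (intro uninorm_mono_left[OF T]) auto
  with False \<open>x \<le> x'\<close> show ?thesis
    by (simp add: max_absorb2)
qed

theorem theorem10:
  shows "(\<forall>S. uninorm S \<longrightarrow>
            rearrangement_ineq min S \<and> dual_rearrangement_ineq min S) \<and>
         (\<forall>T. uninorm T \<longrightarrow>
            rearrangement_ineq T max \<and> dual_rearrangement_ineq T max)"
proof (intro conjI allI impI)
  fix S :: "real \<Rightarrow> real \<Rightarrow> real" assume S: "uninorm S"
  show "rearrangement_ineq min S"
    using uninorm_closed[OF uninorm_min] uninorm_min_exchange[OF S]
    by (rule rearrangement_ineqI[OF S])
  show "dual_rearrangement_ineq min S"
    using uninorm_closed[OF S] min_uninorm_exchange[OF S]
    by (rule dual_rearrangement_ineqI[OF uninorm_min])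
next
  fix T :: "real \<Rightarrow> real \<Rightarrow> real" assume T: "uninorm T"
  show "rearrangement_ineq T max"
    using uninorm_closed[OF T] max_uninorm_exchange[OF T]
    by (rule rearrangement_ineqI[OF uninorm_max])
  show "dual_rearrangement_ineq T max"
    using uninorm_closed[OF uninorm_max] uninorm_max_exchange[OF T]
    by (rule dual_rearrangement_ineqI[OF T])
qed

end
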